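(* Let $x\in\mathbb{R}^I$ and an admissible system $\pi=(\Omega,\mathcal{F},(\mathcal{F}_t),P,U,W)$ be given. Then there exists a controlled process $X$ associated with $x$ and $\pi$, i.e., a continuous $(\mathcal{F}_t)$-adapted process with $\int_0^t|b(X(s),U(s))|ds<\infty$ $P$-a.s. and $X(t)=x+rW(t)+\int_0^tb(X(s),U(s))ds$ for $0\le t<\infty$. Moreover, if $X$ and $\bar X$ are both controlled processes associated with $x$ and $\pi$, then $X(t)=\bar X(t)$ for all $t\ge0$, $P$-a.s.
   Context: Let $I,J\ge1$, $\mathcal{I}=\{1,\dots,I\}$, $\mathcal{J}=\{I+1,\dots,I+J\}$, $\mathcal{E}\subset\mathcal{I}\times\mathcal{J}$, $i\sim j$ iff $(i,j)\in\mathcal{E}$; the bipartite graph $\mathcal{T}$ on $\mathcal{I}\cup\mathcal{J}$ with edges $\mathcal{E}$ is a tree. Constants: $\mu_{ij}>0$ for $(i,j)\in\mathcal{E}$, $\mu_{ij}=0$ otherwise; $\theta_i\ge0$, $r_i>0$, $\ell_i\in\mathbb{R}$; $r=\mathrm{diag}(r_i)$. $e=(1,\dots,1)'$. $\mathbb{U}=\{(u,v)\in\mathbb{R}^I\times\mathbb{R}^J:u_i,v_j\ge0,\ e\cdot u=e\cdot v=1\}$. Since $\mathcal{T}$ is a tree, for $\alpha\in\mathbb{R}^I,\beta\in\mathbb{R}^J$ with $\sum\alpha_i=\sum\beta_j$ there is a unique $\psi=G(\alpha,\beta)$ with $\psi_{ij}=0$ for $i\not\sim j$, $\sum_j\psi_{ij}=\alpha_i$,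 $\sum_i\psi_{ij}=\beta_j$ ($G$ is linear). Put $\widehat G(x,U)=G(x-(e\cdot x)^+u,-(e\cdot x)^-v)$ for $U=(u,v)\in\mathbb{U}$, and $b_i(x,U)=-\sum_j\mu_{ij}\widehat G(x,U)_{ij}-\theta_i(e\cdot x)^+u_i+\ell_i$, $b=(b_i)$. An admissible system $\pi=(\Omega,\mathcal{F},(\mathcal{F}_t),P,U,W)$ consists of a complete filtered probability space, an $(\mathcal{F}_t)$-progressively measurable $\mathbb{U}$-valued process $U$ and a standard $I$-dimensional $(\mathcal{F}_t)$-Brownian motion $W$. *)

theory Defs
  imports "HOL-Probability.Probability"
begin

definition adj :: "('i \<times> 'j) set \<Rightarrow> ('i + 'j) \<Rightarrow> ('i + 'j) \<Rightarrow> bool" where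
  "adj E v w \<longleftrightarrow> (\<exists>i j. (i, j) \<in> E \<and> ((v = Inl i \<and> w = Inr j) \<or> (v = Inr j \<and> w = Inl i)))"

text \<open>A graph is a tree iff it is connected and acyclic; acyclic means every
  edge is a bridge (removing it disconnects its end points).\<close>

definition is_tree :: "('i \<times> 'j) set \<Rightarrow> bool" where
  "is_tree E \<longleftrightarrow>
     (\<forall>v w. (adj E)\<^sup>*\<^sup>* v w) \<and>
     (\<forall>e\<in>E. \<not> (adj (E - {e}))\<^sup>*\<^sup>* (Inl (fst e)) (Inr (snd e)))"

definition G :: "('i::finite \<times> 'j::finite) set \<Rightarrow> real^'i \<Rightarrow> real^'j \<Rightarrow> ('i \<Rightarrow> 'j \<Rightarrow> real)" where
  "G E \<alpha> \<beta> = (THE \<psi>. (\<forall>i j. (i, j) \<notin> E \<longrightarrow> \<psi> i j = 0) \<and>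
                      (\<forall>i. (\<Sum>j\<in>UNIV. \<psi> i j) = \<alpha> $ i) \<and>
                      (\<forall>j. (\<Sum>i\<in>UNIV. \<psi> i j) = \<beta> $ j))"

definition esum :: "real^'n::finite \<Rightarrow> real" where
  "esum x = (\<Sum>i\<in>UNIV. x $ i)"

definition posp :: "real \<Rightarrow> real" where "posp a = max a 0"
definition negp :: "real \<Rightarrow> real" where "negp a = max (- a) 0"

definition UU :: "((real^'i::finite) \<times> (real^'j::finite)) set" where
  "UU = {(u, v). (\<forall>i. u $ i \<ge> 0) \<and> (\<forall>j. v $ j \<ge> 0) \<and> esum u = 1 \<and> esum v = 1}"

definition Ghat :: "('i::finite \<times> 'j::finite) set \<Rightarrow> real^'i \<Rightarrow> ((real^'i) \<times> (real^'j)) \<Rightarrow> ('i \<Rightarrow> 'j \<Rightarrow> real)" where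
  "Ghat E x U = G E (x - posp (esum x) *\<^sub>R fst U) (- (negp (esum x) *\<^sub>R snd U))"

definition drift ::
  "('i::finite \<times> 'j::finite) set \<Rightarrow> ('i \<Rightarrow> 'j \<Rightarrow> real) \<Rightarrow> ('i \<Rightarrow> real) \<Rightarrow> ('i \<Rightarrow> real)
    \<Rightarrow> real^'i \<Rightarrow> ((real^'i) \<times> (real^'j)) \<Rightarrow> real^'i" where
  "drift E \<mu> \<theta> l x U = (\<chi> i. - (\<Sum>j\<in>UNIV. \<mu> i j * Ghat E x U i j)
                           - \<theta> i * posp (esum x) * (fst U $ i) + l i)"

definition complete_space_measure :: "'a measure \<Rightarrow> bool" where
  "complete_space_measure M \<longleftrightarrow> (\<forall>A N. N \<in> null_sets M \<and> A \<subseteq> N \<longrightarrow> A \<in> sets M)"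

definition filtration_on :: "'a measure \<Rightarrow> (real \<Rightarrow> 'a measure) \<Rightarrow> bool" where
  "filtration_on M F \<longleftrightarrow>
     (\<forall>t\<ge>0. space (F t) = space M \<and> sets (F t) \<subseteq> sets M) \<and>
     (\<forall>s t. 0 \<le> s \<and> s \<le> t \<longrightarrow> sets (F s) \<subseteq> sets (F t))"

definition adapted :: "(real \<Rightarrow> 'a measure) \<Rightarrow> (real \<Rightarrow> 'a \<Rightarrow> 'b::topological_space) \<Rightarrow> bool" where
  "adapted F X \<longleftrightarrow> (\<forall>t\<ge>0. X t \<in> borel_measurable (F t))"

definition prog_measurable :: "(real \<Rightarrow> 'a measure) \<Rightarrow> (real \<Rightarrow> 'a \<Rightarrow> 'b::topological_space) \<Rightarrow> bool" where
  "prog_measurable F X \<longleftrightarrow>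
     (\<forall>t\<ge>0. (\<lambda>(s, \<omega>). X s \<omega>) \<in> borel_measurable (restrict_space lborel {0..t} \<Otimes>\<^sub>M F t))"

definition brownian_motion :: "'a measure \<Rightarrow> (real \<Rightarrow> 'a measure) \<Rightarrow> (real \<Rightarrow> 'a \<Rightarrow> real^'i::finite) \<Rightarrow> bool" where
  "brownian_motion M F W \<longleftrightarrow>
     adapted F W \<and>
     (\<forall>\<omega>\<in>space M. W 0 \<omega> = 0 \<and> continuous_on {0..} (\<lambda>t. W t \<omega>)) \<and>
     (\<forall>s t. 0 \<le> s \<and> s < t \<longrightarrow>
        prob_space.indep_vars M (\<lambda>_. borel) (\<lambda>i \<omega>. (W t \<omega> - W s \<omega>) $ i) UNIV \<and>
        (\<forall>i. distributed M lborel (\<lambda>\<omega>. (W t \<omega> - W s \<omega>) $ i) (normal_density 0 (sqrt (t - s)))) \<and>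
        (\<forall>A\<in>sets (F s). \<forall>B\<in>sets borel.
           measure M (A \<inter> {\<omega>\<in>space M. W t \<omega> - W s \<omega> \<in> B})
             = measure M A * measure M {\<omega>\<in>space M. W t \<omega> - W s \<omega> \<in> B}))"

definition admissible ::
  "'a measure \<Rightarrow> (real \<Rightarrow> 'a measure) \<Rightarrow> (real \<Rightarrow> 'a \<Rightarrow> (real^'i::finite) \<times> (real^'j::finite))
     \<Rightarrow> (real \<Rightarrow> 'a \<Rightarrow> real^'i) \<Rightarrow> bool" where
  "admissible M F U W \<longleftrightarrow>
     prob_space M \<and> complete_space_measure M \<and> filtration_on M F \<and>
     prog_measurable F U \<and> (\<forall>t\<ge>0. \<forall>\<omega>\<in>space M. U t \<omega> \<in> UU) \<and>
     brownian_motion M F W"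

definition controlled_process ::
  "('i::finite \<times> 'j::finite) set \<Rightarrow> ('i \<Rightarrow> 'j \<Rightarrow> real) \<Rightarrow> ('i \<Rightarrow> real) \<Rightarrow> ('i \<Rightarrow> real) \<Rightarrow> ('i \<Rightarrow> real)
   \<Rightarrow> real^'i \<Rightarrow> 'a measure \<Rightarrow> (real \<Rightarrow> 'a measure) \<Rightarrow> (real \<Rightarrow> 'a \<Rightarrow> (real^'i) \<times> (real^'j))
   \<Rightarrow> (real \<Rightarrow> 'a \<Rightarrow> real^'i) \<Rightarrow> (real \<Rightarrow> 'a \<Rightarrow> real^'i) \<Rightarrow> bool" where
  "controlled_process E \<mu> \<theta> r l x M F U W X \<longleftrightarrow>
     (\<forall>\<omega>\<in>space M. continuous_on {0..} (\<lambda>t. X t \<omega>)) \<and> adapted F X \<and>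
     (AE \<omega> in M. \<forall>t\<ge>0.
        set_integrable lborel {0..t} (\<lambda>s. drift E \<mu> \<theta> l (X s \<omega>) (U s \<omega>)) \<and>
        X t \<omega> = x + (\<chi> i. r i * W t \<omega> $ i)
                 + (LINT s:{0..t}|lborel. drift E \<mu> \<theta> l (X s \<omega>) (U s \<omega>)))"

end

theory Submission
  imports Defs
begin

text \<open>For \<open>U \<in> UU\<close> the drift evaluates \<open>G\<close> only at balanced pairs, where \<open>G\<close> is linear because
  a tree carries exactly one flow with prescribed (balanced) row and column sums. Hence the drift is
  Lipschitz in \<open>x\<close>, uniformly in \<open>U \<in> UU\<close>, and the equation can be solved path by path by Picard
  iteration: the \<open>n\<close>-th difference of the iterates is at most \<open>C (L t)\<^sup>n / n!\<close>, so they converge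
  locally uniformly to a continuous solution, and each iterate, hence the limit, is progressively
  measurable. The same estimate applied to two solutions gives pathwise uniqueness.\<close>

section \<open>Flows on a tree\<close>

lemma esum_add: "esum (x + y) = esum x + esum y"
  by (simp add: esum_def sum.distrib)

lemma esum_diff: "esum (x - y) = esum x - esum y"
  by (simp add: esum_def sum_subtractf)

lemma esum_scaleR: "esum (c *\<^sub>R x) = c * esum x"
  by (simp add: esum_def sum_distrib_left)

lemma esum_uminus: "esum (- x) = - esum x"
  by (simp add: esum_def sum_negf)

lemma esum_axis: "esum (axis k c) = c"
  by (simp add: esum_def axis_def)

lemma abs_esum_le: "\<bar>esum (x::real^'n::finite)\<bar> \<le> real CARD('n) * norm x"
proof -
  have "\<bar>esum x\<bar> \<le> (\<Sum>i\<in>UNIV. \<bar>x $ i\<bar>)" unfolding esum_def by (rule sum_abs)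
  also have "\<dots> \<le> (\<Sum>i\<in>(UNIV::'n set). norm x)" by (intro sum_mono component_le_norm_cart)
  finally show ?thesis by simp
qed

definition is_flow :: "('i::finite \<times> 'j::finite) set \<Rightarrow> real^'i \<Rightarrow> real^'j \<Rightarrow> ('i \<Rightarrow> 'j \<Rightarrow> real) \<Rightarrow> bool"
  where "is_flow E \<alpha> \<beta> \<psi> \<longleftrightarrow> (\<forall>i j. (i, j) \<notin> E \<longrightarrow> \<psi> i j = 0) \<and>
                       (\<forall>i. (\<Sum>j\<in>UNIV. \<psi> i j) = \<alpha> $ i) \<and> (\<forall>j. (\<Sum>i\<in>UNIV. \<psi> i j) = \<beta> $ j)"

lemma G_eq_The_is_flow: "G E \<alpha> \<beta> = (THE \<psi>. is_flow E \<alpha> \<beta> \<psi>)"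
  by (simp add: G_def is_flow_def)

lemma is_flow_esum_eq: "is_flow E \<alpha> \<beta> \<psi> \<Longrightarrow> esum \<alpha> = esum \<beta>"
  unfolding is_flow_def esum_def by (metis (no_types, lifting) sum.cong sum.swap)

lemma is_flow_add:
  "is_flow E \<alpha> \<beta> \<psi> \<Longrightarrow> is_flow E \<alpha>' \<beta>' \<psi>' \<Longrightarrow> is_flow E (\<alpha> + \<alpha>') (\<beta> + \<beta>') (\<lambda>i j. \<psi> i j + \<psi>' i j)"
  unfolding is_flow_def by (simp add: sum.distrib)

lemma is_flow_diff:
  "is_flow E \<alpha> \<beta> \<psi> \<Longrightarrow> is_flow E \<alpha>' \<beta>' \<psi>' \<Longrightarrow> is_flow E (\<alpha> - \<alpha>') (\<beta> - \<beta>') (\<lambda>i j. \<psi> i j - \<psi>' i j)"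
  unfolding is_flow_def by (simp add: sum_subtractf)

lemma is_flow_scaleR: "is_flow E \<alpha> \<beta> \<psi> \<Longrightarrow> is_flow E (c *\<^sub>R \<alpha>) (c *\<^sub>R \<beta>) (\<lambda>i j. c * \<psi> i j)"
  unfolding is_flow_def by (simp add: sum_distrib_left[symmetric])

lemma sum_UNIV_split: "(\<Sum>j\<in>(UNIV::'a::finite set). f j) = (\<Sum>j\<in>S. f j) + (\<Sum>j\<in>-S. f j)"
  using sum.subset_diff[of S "UNIV::'a set" f] by (simp add: Compl_eq_Diff_UNIV add.commute)

lemma is_flow_0_0_cut:
  assumes "is_flow E 0 0 \<psi>"
  shows "(\<Sum>i\<in>A. \<Sum>j\<in>-B. \<psi> i j) = (\<Sum>j\<in>B. \<Sum>i\<in>-A. \<psi> i j)"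
proof -
  have "0 = (\<Sum>i\<in>A. \<Sum>j\<in>UNIV. \<psi> i j) - (\<Sum>j\<in>B. \<Sum>i\<in>UNIV. \<psi> i j)"
    using assms by (simp add: is_flow_def)
  also have "\<dots> = ((\<Sum>i\<in>A. \<Sum>j\<in>B. \<psi> i j) + (\<Sum>i\<in>A. \<Sum>j\<in>-B. \<psi> i j))
      - ((\<Sum>j\<in>B. \<Sum>i\<in>A. \<psi> i j) + (\<Sum>j\<in>B. \<Sum>i\<in>-A. \<psi> i j))"
    by (simp only: sum_UNIV_split[of _ B] sum_UNIV_split[of _ A] sum.distrib)
  also have "(\<Sum>j\<in>B. \<Sum>i\<in>A. \<psi> i j) = (\<Sum>i\<in>A. \<Sum>j\<in>B. \<psi> i j)"
    by (rule sum.swap)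
  finally show ?thesis by simp
qed

text \<open>Deleting the edge \<open>(i\<^sub>0, j\<^sub>0)\<close> separates \<open>i\<^sub>0\<close> from \<open>j\<^sub>0\<close>. Across the cut around the component
  of \<open>i\<^sub>0\<close>, the only edge is \<open>(i\<^sub>0, j\<^sub>0)\<close>, leading out; so the outflow is \<open>\<psi> i\<^sub>0 j\<^sub>0\<close> and the
  inflow is \<open>0\<close>.\<close>

lemma is_flow_0_0_eq_0:
  assumes bridges: "\<forall>e\<in>E. \<not> (adj (E - {e}))\<^sup>*\<^sup>* (Inl (fst e)) (Inr (snd e))"
    and flow: "is_flow E 0 0 \<psi>"
  shows "\<psi> i\<^sub>0 j\<^sub>0 = 0"
proof (cases "(i\<^sub>0, j\<^sub>0) \<in> E")
  case False
  then show ?thesis using flow by (simp add: is_flow_def)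
next
  case True
  define C where "C = {v. (adj (E - {(i\<^sub>0, j\<^sub>0)}))\<^sup>*\<^sup>* (Inl i\<^sub>0) v}"
  define CI where "CI = {i. Inl i \<in> C}"
  define CJ where "CJ = {j. Inr j \<in> C}"
  have supp: "\<psi> i j = 0" if "(i, j) \<notin> E" for i j
    using flow that by (simp add: is_flow_def)
  have i\<^sub>0: "i\<^sub>0 \<in> CI" by (simp add: CI_def C_def)
  have j\<^sub>0: "j\<^sub>0 \<notin> CJ" using bridges True by (force simp: CJ_def C_def)
  have closed: "w \<in> C" if "v \<in> C" "adj (E - {(i\<^sub>0, j\<^sub>0)}) v w" for v w
    using that by (auto simp: C_def intro: rtranclp.rtrancl_into_rtrancl)
  have out: "\<psi> i j = 0" if "i \<in> CI" "j \<notin> CJ" "(i, j) \<noteq> (i\<^sub>0, j\<^sub>0)" for i j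
  proof (cases "(i, j) \<in> E")
    case True
    then have "adj (E - {(i\<^sub>0, j\<^sub>0)}) (Inl i) (Inr j)" using that(3) by (auto simp: adj_def)
    then show ?thesis using closed that(1,2) by (auto simp: CI_def CJ_def)
  qed (use supp in auto)
  have into: "\<psi> i j = 0" if "i \<notin> CI" "j \<in> CJ" for i j
  proof (cases "(i, j) \<in> E - {(i\<^sub>0, j\<^sub>0)}")
    case True
    then have "adj (E - {(i\<^sub>0, j\<^sub>0)}) (Inr j) (Inl i)" by (auto simp: adj_def)
    then show ?thesis using closed that by (auto simp: CI_def CJ_def)
  qed (use supp that i\<^sub>0 in auto)
  have "\<psi> i\<^sub>0 j\<^sub>0 = (\<Sum>i\<in>CI. if i = i\<^sub>0 then \<psi> i\<^sub>0 j\<^sub>0 else 0)"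
    using i\<^sub>0 by simp
  also have "\<dots> = (\<Sum>i\<in>CI. \<Sum>j\<in>-CJ. if i = i\<^sub>0 \<and> j = j\<^sub>0 then \<psi> i\<^sub>0 j\<^sub>0 else 0)"
    using j\<^sub>0 by (intro sum.cong refl) simp
  also have "\<dots> = (\<Sum>i\<in>CI. \<Sum>j\<in>-CJ. \<psi> i j)"
    using out by (intro sum.cong refl) auto
  also have "\<dots> = (\<Sum>j\<in>CJ. \<Sum>i\<in>-CI. \<psi> i j)"
    by (rule is_flow_0_0_cut[OF flow])
  also have "\<dots> = 0"
    using into by simp
  finally show ?thesis .
qed

lemma is_flow_unique:
  assumes "\<forall>e\<in>E. \<not> (adj (E - {e}))\<^sup>*\<^sup>* (Inl (fst e)) (Inr (snd e))"
    and "is_flow E \<alpha> \<beta> \<psi>" "is_flow E \<alpha> \<beta> \<psi>'"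
  shows "\<psi> = \<psi>'"
proof -
  have "is_flow E 0 0 (\<lambda>i j. \<psi> i j - \<psi>' i j)"
    using is_flow_diff[OF assms(2,3)] by simp
  from is_flow_0_0_eq_0[OF assms(1) this] show ?thesis by (simp add: fun_eq_iff)
qed

lemma edge_potential_eq_0:
  fixes a :: "real^'i::finite" and b :: "real^'j::finite"
  assumes connected: "\<forall>v w. (adj E)\<^sup>*\<^sup>* v w"
    and edge: "\<And>i j. (i, j) \<in> E \<Longrightarrow> a $ i + b $ j = 0"
    and balanced: "esum a = esum b"
  shows "a = 0 \<and> b = 0"
proof -
  define h where "h v = (case v of Inl i \<Rightarrow> a $ i | Inr j \<Rightarrow> - b $ j)" for v
  have "h v = h w" for v w
    using connected[rule_format, of v w]
  proof (induction rule: rtranclp_induct)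
    case (step w w')
    then show ?case using edge by (auto simp: adj_def h_def add_eq_0_iff)
  qed simp
  then obtain c where a: "\<And>i. a $ i = c" and b: "\<And>j. b $ j = - c"
    by (metis h_def sum.simps(5,6) minus_minus)
  then have "(real CARD('i) + real CARD('j)) * c = 0"
    using balanced by (simp add: esum_def algebra_simps)
  moreover have "real CARD('i) + real CARD('j) > 0" by (simp add: add_pos_pos)
  ultimately have "c = 0" by simp
  then show ?thesis by (simp add: vec_eq_iff a b)
qed

text \<open>The boundary map \<open>\<psi> \<mapsto> (row sums, column sums)\<close> on flows supported by \<open>E\<close> is linear;
  a vector orthogonal to its range is an edge potential, hence zero on balanced pairs.\<close>

lemma is_flow_exists:
  fixes E :: "('i::finite \<times> 'j::finite) set"
  assumes connected: "\<forall>v w. (adj E)\<^sup>*\<^sup>* v w" and balanced: "esum \<alpha> = esum \<beta>"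
  shows "\<exists>\<psi>. is_flow E \<alpha> \<beta> \<psi>"
proof -
  define restr :: "real^('i \<times> 'j) \<Rightarrow> 'i \<Rightarrow> 'j \<Rightarrow> real" where
    "restr \<psi> i j = (if (i, j) \<in> E then \<psi> $ (i, j) else 0)" for \<psi> i j
  define bd :: "real^('i \<times> 'j) \<Rightarrow> (real^'i) \<times> (real^'j)" where
    "bd \<psi> = ((\<chi> i. \<Sum>j\<in>UNIV. restr \<psi> i j), (\<chi> j. \<Sum>i\<in>UNIV. restr \<psi> i j))" for \<psi>
  have "linear bd"
    by (rule linearI)
       (auto simp: bd_def restr_def vec_eq_iff sum.distrib[symmetric] sum_distrib_left intro!: sum.cong)
  then have span: "span (range bd) = range bd"
    using span_linear_image[of bd UNIV] by simp
  obtain \<psi> a b where decomp: "(\<alpha>, \<beta>) = bd \<psi> + (a, b)"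
    and orth: "\<And>z. z \<in> range bd \<Longrightarrow> orthogonal (a, b) z"
    using orthogonal_subspace_decomp_exists[of "range bd" "(\<alpha>, \<beta>)"] span by (metis imageE surj_pair)
  have "a $ i + b $ j = 0" if "(i, j) \<in> E" for i j
  proof -
    have "restr (axis (i, j) 1) i' j' = (if i' = i then if j' = j then 1 else 0 else 0)"
      and "restr (axis (i, j) 1) i' j' = (if j' = j then if i' = i then 1 else 0 else 0)" for i' j'
      using that by (auto simp: restr_def axis_def)
    then have "bd (axis (i, j) 1) = (axis i 1, axis j 1)"
      unfolding bd_def by (simp add: vec_eq_iff axis_def)
    then show ?thesis
      using orth[OF rangeI[of bd "axis (i, j) 1"]] by (simp add: orthogonal_def inner_axis)
  qed
  moreover have "esum a = esum b"
  proof -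
    have "esum (fst (bd \<psi>)) = esum (snd (bd \<psi>))"
      by (simp add: bd_def esum_def sum.swap[of _ "UNIV::'i set"])
    then show ?thesis using decomp balanced by (simp add: prod_eq_iff esum_add)
  qed
  ultimately have "a = 0 \<and> b = 0" by (rule edge_potential_eq_0[OF connected])
  then have "is_flow E \<alpha> \<beta> (restr \<psi>)"
    using decomp by (auto simp: is_flow_def bd_def restr_def vec_eq_iff)
  then show ?thesis by blast
qed

lemma G_is_flow:
  assumes tree: "is_tree E" and balanced: "esum \<alpha> = esum \<beta>"
  shows "is_flow E \<alpha> \<beta> (G E \<alpha> \<beta>)"
proof -
  have connected: "\<forall>v w. (adj E)\<^sup>*\<^sup>* v w"
    and bridges: "\<forall>e\<in>E. \<not> (adj (E - {e}))\<^sup>*\<^sup>* (Inl (fst e)) (Inr (snd e))"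
    using tree by (simp_all add: is_tree_def)
  obtain \<psi> where "is_flow E \<alpha> \<beta> \<psi>" using is_flow_exists[OF connected balanced] ..
  then have "\<exists>!\<psi>. is_flow E \<alpha> \<beta> \<psi>" using is_flow_unique[OF bridges] by auto
  then show ?thesis unfolding G_eq_The_is_flow by (rule theI')
qed

lemma G_eqI:
  assumes tree: "is_tree E" and flow: "is_flow E \<alpha> \<beta> \<psi>"
  shows "G E \<alpha> \<beta> = \<psi>"
proof (rule is_flow_unique)
  show "\<forall>e\<in>E. \<not> (adj (E - {e}))\<^sup>*\<^sup>* (Inl (fst e)) (Inr (snd e))"
    using tree by (simp add: is_tree_def)
qed (use G_is_flow[OF tree is_flow_esum_eq[OF flow]] flow in auto)

section \<open>The drift\<close>

text \<open>Moving the imbalance \<open>esum \<alpha> - esum \<beta>\<close> into one (arbitrary) row makes \<open>G_ext\<close>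
  linear on all of \<open>\<real>\<^sup>I \<times> \<real>\<^sup>J\<close>.\<close>

definition G_ext :: "('i::finite \<times> 'j::finite) set \<Rightarrow> real^'i \<Rightarrow> real^'j \<Rightarrow> 'i \<Rightarrow> 'j \<Rightarrow> real"
  where "G_ext E \<alpha> \<beta> = G E (\<alpha> - (esum \<alpha> - esum \<beta>) *\<^sub>R axis undefined 1) \<beta>"

lemma G_ext_eq_G: "esum \<alpha> = esum \<beta> \<Longrightarrow> G_ext E \<alpha> \<beta> = G E \<alpha> \<beta>"
  by (simp add: G_ext_def)

lemma G_ext_is_flow:
  "is_tree E \<Longrightarrow> is_flow E (\<alpha> - (esum \<alpha> - esum \<beta>) *\<^sub>R axis undefined 1) \<beta> (G_ext E \<alpha> \<beta>)"
  unfolding G_ext_def by (rule G_is_flow) (simp_all add: esum_diff esum_scaleR esum_axis)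

lemma linear_G_ext:
  fixes E :: "('i::finite \<times> 'j::finite) set"
  assumes tree: "is_tree E"
  shows "linear (\<lambda>z. G_ext E (fst z) (snd z) i j)"
proof (rule linearI)
  fix z z' :: "(real^'i) \<times> (real^'j)"
  have "is_flow E (fst (z + z') - (esum (fst (z + z')) - esum (snd (z + z'))) *\<^sub>R axis undefined 1)
      (snd (z + z')) (\<lambda>i j. G_ext E (fst z) (snd z) i j + G_ext E (fst z') (snd z') i j)"
    using is_flow_add[OF G_ext_is_flow[OF tree] G_ext_is_flow[OF tree]]
    by (simp add: esum_add algebra_simps)
  from G_eqI[OF tree this]
  show "G_ext E (fst (z + z')) (snd (z + z')) i j = G_ext E (fst z) (snd z) i j + G_ext E (fst z') (snd z') i j"
    by (simp add: G_ext_def)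
next
  fix c :: real and z :: "(real^'i) \<times> (real^'j)"
  have "is_flow E (fst (c *\<^sub>R z) - (esum (fst (c *\<^sub>R z)) - esum (snd (c *\<^sub>R z))) *\<^sub>R axis undefined 1)
      (snd (c *\<^sub>R z)) (\<lambda>i j. c * G_ext E (fst z) (snd z) i j)"
    using is_flow_scaleR[OF G_ext_is_flow[OF tree]] by (simp add: esum_scaleR algebra_simps)
  from G_eqI[OF tree this]
  show "G_ext E (fst (c *\<^sub>R z)) (snd (c *\<^sub>R z)) i j = c *\<^sub>R G_ext E (fst z) (snd z) i j"
    by (simp add: G_ext_def)
qed

lemma G_ext_add:
  assumes "is_tree E"
  shows "G_ext E (\<alpha> + \<alpha>') (\<beta> + \<beta>') i j = G_ext E \<alpha> \<beta> i j + G_ext E \<alpha>' \<beta>' i j"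
  using linear_add[OF linear_G_ext[OF assms, of i j], of "(\<alpha>, \<beta>)" "(\<alpha>', \<beta>')"] by simp

lemma G_ext_scaleR:
  assumes "is_tree E"
  shows "G_ext E (c *\<^sub>R \<alpha>) (c *\<^sub>R \<beta>) i j = c * G_ext E \<alpha> \<beta> i j"
  using linear_scale[OF linear_G_ext[OF assms, of i j], of c "(\<alpha>, \<beta>)"] by simp

definition flow_rate :: "('i::finite \<times> 'j::finite) set \<Rightarrow> ('i \<Rightarrow> 'j \<Rightarrow> real) \<Rightarrow> (real^'i) \<times> (real^'j) \<Rightarrow> real^'i"
  where "flow_rate E \<mu> z = (\<chi> i. \<Sum>j\<in>UNIV. \<mu> i j * G_ext E (fst z) (snd z) i j)"

lemma bounded_linear_flow_rate:
  assumes tree: "is_tree E"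
  shows "bounded_linear (flow_rate E \<mu>)"
proof -
  have "linear (flow_rate E \<mu>)"
    by (rule linearI)
       (simp_all add: flow_rate_def vec_eq_iff G_ext_add[OF tree] G_ext_scaleR[OF tree]
         distrib_left sum.distrib sum_distrib_left algebra_simps)
  then show ?thesis by (simp add: linear_conv_bounded_linear)
qed

text \<open>For \<open>U \<in> UU\<close> the drift evaluates \<open>G\<close> only at balanced pairs, so replacing \<open>G\<close> by \<open>G_ext\<close>
  does not change it there but makes it continuous in \<open>(x, U)\<close> jointly.\<close>

definition drift_ext :: "('i::finite \<times> 'j::finite) set \<Rightarrow> ('i \<Rightarrow> 'j \<Rightarrow> real) \<Rightarrow> ('i \<Rightarrow> real) \<Rightarrow> ('i \<Rightarrow> real)
    \<Rightarrow> real^'i \<Rightarrow> (real^'i) \<times> (real^'j) \<Rightarrow> real^'i"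
  where "drift_ext E \<mu> \<theta> l x U =
    - flow_rate E \<mu> (x - posp (esum x) *\<^sub>R fst U, - (negp (esum x) *\<^sub>R snd U))
    - posp (esum x) *\<^sub>R (\<chi> i. \<theta> i * fst U $ i) + (\<chi> i. l i)"

lemma drift_eq_drift_ext:
  assumes "U \<in> UU"
  shows "drift E \<mu> \<theta> l x U = drift_ext E \<mu> \<theta> l x U"
proof -
  have "esum (fst U) = 1" "esum (snd U) = 1"
    using assms by (auto simp: UU_def)
  then have "esum (x - posp (esum x) *\<^sub>R fst U) = esum (- (negp (esum x) *\<^sub>R snd U))"
    by (simp add: esum_diff esum_scaleR esum_uminus posp_def negp_def)
  then show ?thesis
    by (simp add: drift_def drift_ext_def Ghat_def flow_rate_def G_ext_eq_G vec_eq_iff)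
qed

lemma norm_fst_le_1_if_UU: "U \<in> UU \<Longrightarrow> norm (fst U) \<le> 1"
  and norm_snd_le_1_if_UU: "U \<in> UU \<Longrightarrow> norm (snd U) \<le> 1"
  using norm_le_l1_cart[of "fst U"] norm_le_l1_cart[of "snd U"] by (auto simp: UU_def esum_def)

lemma continuous_on_esum [continuous_intros]: "continuous_on S f \<Longrightarrow> continuous_on S (\<lambda>w. esum (f w))"
  unfolding esum_def by (intro continuous_intros)

lemma continuous_on_posp [continuous_intros]: "continuous_on S f \<Longrightarrow> continuous_on S (\<lambda>w. posp (f w))"
  unfolding posp_def by (intro continuous_intros)

lemma continuous_on_negp [continuous_intros]: "continuous_on S f \<Longrightarrow> continuous_on S (\<lambda>w. negp (f w))"
  unfolding negp_def by (intro continuous_intros)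

lemma continuous_on_drift_ext:
  assumes "is_tree E"
  shows "continuous_on UNIV (\<lambda>z. drift_ext E \<mu> \<theta> l (fst z) (snd z))"
  unfolding drift_ext_def
  by (intro continuous_intros linear_continuous_on_compose[OF _ bounded_linear.linear[OF bounded_linear_flow_rate[OF assms]]])

lemma drift_ext_0: "is_tree E \<Longrightarrow> drift_ext E \<mu> \<theta> l 0 U = (\<chi> i. l i)"
  using linear_0[OF bounded_linear.linear[OF bounded_linear_flow_rate]]
  by (simp add: drift_ext_def esum_def posp_def negp_def zero_prod_def)

lemma drift_ext_eq:
  assumes "is_tree E"
  shows "drift_ext E \<mu> \<theta> l x U = - flow_rate E \<mu> (x, 0)
    + posp (esum x) *\<^sub>R (flow_rate E \<mu> (fst U, 0) - (\<chi> i. \<theta> i * fst U $ i))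
    + negp (esum x) *\<^sub>R flow_rate E \<mu> (0, snd U) + (\<chi> i. l i)"
proof -
  note lin = bounded_linear.linear[OF bounded_linear_flow_rate[OF assms]]
  have "(x - posp (esum x) *\<^sub>R fst U, - (negp (esum x) *\<^sub>R snd U))
      = (x, 0) - posp (esum x) *\<^sub>R (fst U, 0) - negp (esum x) *\<^sub>R (0, snd U)"
    by simp
  then have "flow_rate E \<mu> (x - posp (esum x) *\<^sub>R fst U, - (negp (esum x) *\<^sub>R snd U))
      = flow_rate E \<mu> (x, 0) - posp (esum x) *\<^sub>R flow_rate E \<mu> (fst U, 0)
        - negp (esum x) *\<^sub>R flow_rate E \<mu> (0, snd U)"
    by (simp only: linear_diff[OF lin] linear_scale[OF lin])
  then show ?thesis by (simp add: drift_ext_def algebra_simps)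
qed

lemma drift_ext_coefficients_bounded:
  fixes E :: "('i::finite \<times> 'j::finite) set"
  assumes "is_tree E"
  obtains K where "0 \<le> K"
    "\<And>U :: (real^'i) \<times> (real^'j). U \<in> UU \<Longrightarrow>
      norm (flow_rate E \<mu> (fst U, 0) - (\<chi> i. \<theta> i * fst U $ i)) \<le> K"
    "\<And>U :: (real^'i) \<times> (real^'j). U \<in> UU \<Longrightarrow> norm (flow_rate E \<mu> (0, snd U)) \<le> K"
proof -
  obtain K\<^sub>f where K\<^sub>f: "\<And>z. norm (flow_rate E \<mu> z) \<le> norm z * K\<^sub>f" "0 < K\<^sub>f"
    using bounded_linear.pos_bounded[OF bounded_linear_flow_rate[OF assms]] by blast
  have "linear (\<lambda>u::real^'i. \<chi> i. \<theta> i * u $ i)"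
    by (rule linearI) (simp_all add: vec_eq_iff algebra_simps)
  then obtain K\<^sub>\<theta> where K\<^sub>\<theta>: "\<And>u::real^'i. norm (\<chi> i. \<theta> i * u $ i) \<le> norm u * K\<^sub>\<theta>" "0 < K\<^sub>\<theta>"
    using bounded_linear.pos_bounded linear_conv_bounded_linear by blast
  have "norm (flow_rate E \<mu> (fst U, 0) - (\<chi> i. \<theta> i * fst U $ i)) \<le> K\<^sub>f + K\<^sub>\<theta>"
    if U: "U \<in> UU" for U :: "(real^'i) \<times> (real^'j)"
  proof -
    have "norm (flow_rate E \<mu> (fst U, 0) - (\<chi> i. \<theta> i * fst U $ i))
        \<le> norm (flow_rate E \<mu> (fst U, 0)) + norm (\<chi> i. \<theta> i * fst U $ i)"
      by (rule norm_triangle_ineq4)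
    also have "\<dots> \<le> norm (fst U) * K\<^sub>f + norm (fst U) * K\<^sub>\<theta>"
      using K\<^sub>f(1)[of "(fst U, 0)"] K\<^sub>\<theta>(1)[of "fst U"] by (simp add: norm_Pair add_mono)
    also have "\<dots> \<le> 1 * K\<^sub>f + 1 * K\<^sub>\<theta>"
      using norm_fst_le_1_if_UU[OF U] K\<^sub>f(2) K\<^sub>\<theta>(2) by (intro add_mono mult_right_mono) auto
    finally show ?thesis by simp
  qed
  moreover have "norm (flow_rate E \<mu> (0, snd U)) \<le> K\<^sub>f + K\<^sub>\<theta>"
    if U: "U \<in> UU" for U :: "(real^'i) \<times> (real^'j)"
  proof -
    have "norm (flow_rate E \<mu> (0, snd U)) \<le> norm (snd U) * K\<^sub>f"
      using K\<^sub>f(1)[of "(0, snd U)"] by (simp add: norm_Pair)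
    also have "\<dots> \<le> 1 * K\<^sub>f"
      using norm_snd_le_1_if_UU[OF U] K\<^sub>f(2) by (intro mult_right_mono) auto
    finally show ?thesis using K\<^sub>\<theta>(2) by simp
  qed
  moreover have "0 \<le> K\<^sub>f + K\<^sub>\<theta>" using K\<^sub>f(2) K\<^sub>\<theta>(2) by simp
  ultimately show ?thesis using that by blast
qed

text \<open>By \<open>drift_ext_eq\<close>, only the Lipschitz scalars \<open>posp (esum x)\<close> and \<open>negp (esum x)\<close> multiply
  terms depending on \<open>U\<close>, and these terms are bounded on \<open>UU\<close>.\<close>

lemma drift_ext_lipschitz:
  fixes E :: "('i::finite \<times> 'j::finite) set"
  assumes tree: "is_tree E"
  obtains L where "0 \<le> L"
    and "\<And>U x y. U \<in> UU \<Longrightarrow> norm (drift_ext E \<mu> \<theta> l x U - drift_ext E \<mu> \<theta> l y U) \<le> L * norm (x - y)"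
proof -
  let ?fr = "flow_rate E \<mu>" and ?N = "real CARD('i)"
  obtain K\<^sub>f where K\<^sub>f: "\<And>z. norm (?fr z) \<le> norm z * K\<^sub>f" "0 < K\<^sub>f"
    using bounded_linear.pos_bounded[OF bounded_linear_flow_rate[OF tree]] by blast
  obtain K where K: "0 \<le> K" and
    a: "\<And>U :: (real^'i) \<times> (real^'j). U \<in> UU \<Longrightarrow> norm (?fr (fst U, 0) - (\<chi> i. \<theta> i * fst U $ i)) \<le> K" and
    b: "\<And>U :: (real^'i) \<times> (real^'j). U \<in> UU \<Longrightarrow> norm (?fr (0, snd U)) \<le> K"
    using drift_ext_coefficients_bounded[OF tree] by blast
  show ?thesis
  proof (rule that[of "K\<^sub>f + 2 * ?N * K"])
    show "0 \<le> K\<^sub>f + 2 * ?N * K"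
      using K\<^sub>f(2) K by simp
  next
    fix U :: "(real^'i) \<times> (real^'j)" and x y :: "real^'i" assume U: "U \<in> UU"
    have esum: "\<bar>esum x - esum y\<bar> \<le> ?N * norm (x - y)"
      using abs_esum_le[of "x - y"] by (simp add: esum_diff)
    then have pos: "\<bar>posp (esum x) - posp (esum y)\<bar> \<le> ?N * norm (x - y)"
      and neg: "\<bar>negp (esum x) - negp (esum y)\<bar> \<le> ?N * norm (x - y)"
      by (simp_all add: posp_def negp_def)
    have "drift_ext E \<mu> \<theta> l x U - drift_ext E \<mu> \<theta> l y U = - ?fr (x - y, 0)
        + (posp (esum x) - posp (esum y)) *\<^sub>R (?fr (fst U, 0) - (\<chi> i. \<theta> i * fst U $ i))
        + (negp (esum x) - negp (esum y)) *\<^sub>R ?fr (0, snd U)"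
      using linear_diff[OF bounded_linear.linear[OF bounded_linear_flow_rate[OF tree, of \<mu>]], of "(x, 0)" "(y, 0)"]
      by (simp add: drift_ext_eq[OF tree] scaleR_diff_left)
    also have "norm \<dots> \<le> norm (x - y) * K\<^sub>f + ?N * norm (x - y) * K + ?N * norm (x - y) * K"
      using K\<^sub>f(1)[of "(x - y, 0)"] mult_mono'[OF pos a[OF U]] mult_mono'[OF neg b[OF U]]
      by (intro norm_triangle_le add_mono) auto
    finally show "norm (drift_ext E \<mu> \<theta> l x U - drift_ext E \<mu> \<theta> l y U) \<le> (K\<^sub>f + 2 * ?N * K) * norm (x - y)"
      by (simp add: algebra_simps)
  qed
qed

section \<open>Lipschitz integral equations\<close>

lemma continuous_on_atLeast_if_atLeastAtMost:
  fixes f :: "real \<Rightarrow> 'a::topological_space"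
  assumes "\<And>T. a \<le> T \<Longrightarrow> continuous_on {a..T} f"
  shows "continuous_on {a..} f"
  unfolding continuous_on_eq_continuous_within
proof
  fix x assume x: "x \<in> {a..}"
  have "continuous (at x within {a..x + 1}) f"
    using assms[of "x + 1"] x by (simp add: continuous_on_eq_continuous_within)
  moreover have "at x within {a..} = at x within {a..x + 1}"
    by (rule at_within_nhd[of x "{x - 1<..<x + 1}"]) auto
  ultimately show "continuous (at x within {a..}) f" by simp
qed

lemma continuous_on_atLeast_norm_bound:
  fixes f :: "real \<Rightarrow> 'a::real_normed_vector"
  assumes "continuous_on {0..} f"
  obtains C where "0 \<le> C" "\<And>s. s \<in> {0..T} \<Longrightarrow> norm (f s) \<le> C"
proof -
  have "bounded (f ` {0..T})"
    by (intro compact_imp_bounded compact_continuous_image continuous_on_subset[OF assms]) auto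
  then obtain C where "\<And>s. s \<in> {0..T} \<Longrightarrow> norm (f s) \<le> C"
    unfolding bounded_iff by blast
  then show ?thesis using that[of "max C 0"] by fastforce
qed

lemma continuous_on_indefinite_set_integral:
  fixes f :: "real \<Rightarrow> 'a::euclidean_space"
  assumes "\<And>t. 0 \<le> t \<Longrightarrow> set_integrable lborel {0..t} f"
  shows "continuous_on {0..} (\<lambda>t. LINT s:{0..t}|lborel. f s)"
proof (rule continuous_on_atLeast_if_atLeastAtMost)
  fix T :: real assume "0 \<le> T"
  have "continuous_on {0..T} (\<lambda>t. integral {0..t} f)"
    by (rule indefinite_integral_continuous_1 set_borel_integral_eq_integral(1) assms \<open>0 \<le> T\<close>)+
  then show "continuous_on {0..T} (\<lambda>t. LINT s:{0..t}|lborel. f s)"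
    by (rule continuous_on_eq) (simp add: set_borel_integral_eq_integral(2)[OF assms])
qed

lemma norm_set_integral_le_power:
  fixes f :: "real \<Rightarrow> 'a::{banach, second_countable_topology}"
  assumes t: "0 \<le> t" and f: "set_integrable lborel {0..t} f"
    and bound: "\<And>s. s \<in> {0..t} \<Longrightarrow> norm (f s) \<le> K * s ^ n"
  shows "norm (LINT s:{0..t}|lborel. f s) \<le> K * t ^ Suc n / Suc n"
proof -
  have "set_integrable lborel {0..t} (\<lambda>s. K * s ^ n)"
    by (rule borel_integrable_atLeastAtMost') (intro continuous_intros)
  then have "norm (LINT s:{0..t}|lborel. f s) \<le> (LINT s:{0..t}|lborel. K * s ^ n)"
    using set_integral_norm_bound[OF f] set_integral_mono[OF set_integrable_norm[OF f] _ bound]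
    by (meson order_trans)
  also have "\<dots> = K * (\<integral>s. s ^ n * indicator {0..t} s \<partial>lborel)"
    unfolding set_lebesgue_integral_def
    using integral_mult_right_zero[where c=K and f="\<lambda>s. s ^ n * indicator {0..t} s" and M=lborel] by (simp add: mult_ac)
  also have "\<dots> = K * t ^ Suc n / Suc n"
    using integral_power[OF t, of n] by simp
  finally show ?thesis .
qed

lemma exp_series_term_summable: "summable (\<lambda>n. C * x ^ n / fact n :: real)"
  using summable_mult[OF summable_exp, of C x] by (simp add: field_simps)

primrec picard_iter :: "(real \<Rightarrow> 'v \<Rightarrow> 'v::{banach, second_countable_topology}) \<Rightarrow> (real \<Rightarrow> 'v) \<Rightarrow> nat \<Rightarrow> real \<Rightarrow> 'v"
  where
    "picard_iter g w 0 = w"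
  | "picard_iter g w (Suc n) = (\<lambda>t. w t + (LINT s:{0..t}|lborel. g s (picard_iter g w n s)))"

definition picard_limit :: "(real \<Rightarrow> 'v \<Rightarrow> 'v::{banach, second_countable_topology}) \<Rightarrow> (real \<Rightarrow> 'v) \<Rightarrow> real \<Rightarrow> 'v"
  where "picard_limit g w t = lim (\<lambda>n. picard_iter g w n t)"

definition solves_integral_equation ::
    "(real \<Rightarrow> 'v \<Rightarrow> 'v::{banach, second_countable_topology}) \<Rightarrow> (real \<Rightarrow> 'v) \<Rightarrow> (real \<Rightarrow> 'v) \<Rightarrow> bool"
  where "solves_integral_equation g w X \<longleftrightarrow>
    continuous_on {0..} X \<and> (\<forall>t\<ge>0. X t = w t + (LINT s:{0..t}|lborel. g s (X s)))"

text \<open>Measurability in \<open>s\<close> is only asked for along continuous paths: this is what a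
  progressively measurable control provides, path by path.\<close>

locale lipschitz_integral_equation =
  fixes g :: "real \<Rightarrow> 'v::euclidean_space \<Rightarrow> 'v" and L B :: real
  assumes measurable_along: "\<And>X t. continuous_on {0..} X \<Longrightarrow> 0 \<le> t \<Longrightarrow>
      (\<lambda>s. g s (X s)) \<in> borel_measurable (restrict_space lborel {0..t})"
    and lipschitz: "\<And>s x y. 0 \<le> s \<Longrightarrow> norm (g s x - g s y) \<le> L * norm (x - y)"
    and bounded_at_0: "\<And>s. 0 \<le> s \<Longrightarrow> norm (g s 0) \<le> B"
    and L_nonneg: "0 \<le> L"
begin

lemma set_integrable_along:
  assumes X: "continuous_on {0..} X" and t: "0 \<le> t"
  shows "set_integrable lborel {0..t} (\<lambda>s. g s (X s))"
proof -
  obtain C where C: "\<And>s. s \<in> {0..t} \<Longrightarrow> norm (X s) \<le> C"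
    using continuous_on_atLeast_norm_bound[OF X] by blast
  have bound: "norm (g s (X s)) \<le> B + L * C" if s: "s \<in> {0..t}" for s
  proof -
    have "norm (g s (X s)) \<le> norm (g s 0) + norm (g s (X s) - g s 0)"
      by (rule norm_triangle_sub)
    also have "\<dots> \<le> B + L * C"
      using bounded_at_0[of s] lipschitz[of s "X s" 0] mult_left_mono[OF C[OF s] L_nonneg] s by simp
    finally show ?thesis .
  qed
  have "(\<lambda>s. indicator {0..t} s *\<^sub>R g s (X s)) \<in> borel_measurable lborel"
    using measurable_along[OF X t] by (subst (asm) borel_measurable_restrict_space_iff) auto
  then show ?thesis
    unfolding set_integrable_def
    by (intro integrableI_bounded_set[where A="{0..t}" and B="B + L * C"])
       (use bound t in \<open>auto split: split_indicator simp: ennreal_less_top\<close>)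
qed

lemma continuous_on_integral_along:
  "continuous_on {0..} X \<Longrightarrow> continuous_on {0..} (\<lambda>t. LINT s:{0..t}|lborel. g s (X s))"
  by (rule continuous_on_indefinite_set_integral) (rule set_integrable_along)

lemma norm_integral_along_diff_le:
  assumes X: "continuous_on {0..} X" and Y: "continuous_on {0..} Y" and t: "0 \<le> t"
    and close: "\<And>s. s \<in> {0..t} \<Longrightarrow> norm (X s - Y s) \<le> C * (L * s) ^ n / fact n"
  shows "norm ((LINT s:{0..t}|lborel. g s (X s)) - (LINT s:{0..t}|lborel. g s (Y s)))
    \<le> C * (L * t) ^ Suc n / fact (Suc n)"
proof -
  note X_int = set_integrable_along[OF X t] and Y_int = set_integrable_along[OF Y t]
  have "norm ((LINT s:{0..t}|lborel. g s (X s)) - (LINT s:{0..t}|lborel. g s (Y s)))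
      = norm (LINT s:{0..t}|lborel. g s (X s) - g s (Y s))"
    by (simp add: set_integral_diff(2)[OF X_int Y_int])
  also have "\<dots> \<le> (L * C * L ^ n / fact n) * t ^ Suc n / Suc n"
  proof (rule norm_set_integral_le_power[OF t set_integral_diff(1)[OF X_int Y_int]])
    fix s assume s: "s \<in> {0..t}"
    have "norm (g s (X s) - g s (Y s)) \<le> L * norm (X s - Y s)"
      using lipschitz s by simp
    also have "\<dots> \<le> L * (C * (L * s) ^ n / fact n)"
      using close[OF s] L_nonneg by (rule mult_left_mono)
    finally show "norm (g s (X s) - g s (Y s)) \<le> L * C * L ^ n / fact n * s ^ n"
      by (simp add: power_mult_distrib)
  qed
  also have "\<dots> = C * (L * t) ^ Suc n / fact (Suc n)"
    by (simp add: power_mult_distrib field_simps)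
  finally show ?thesis .
qed

lemma continuous_on_picard_iter:
  "continuous_on {0..} w \<Longrightarrow> continuous_on {0..} (picard_iter g w n)"
  by (induction n) (simp_all add: continuous_on_add continuous_on_integral_along)

lemma picard_iter_diff_le:
  assumes w: "continuous_on {0..} w"
  obtains C where "0 \<le> C"
    "\<And>n t. t \<in> {0..T} \<Longrightarrow> norm (picard_iter g w (Suc n) t - picard_iter g w n t) \<le> C * (L * t) ^ n / fact n"
proof -
  let ?P = "picard_iter g w"
  have "continuous_on {0..} (\<lambda>t. ?P 1 t - ?P 0 t)"
    by (intro continuous_on_diff continuous_on_picard_iter w)
  then obtain C where C: "0 \<le> C" "\<And>t. t \<in> {0..T} \<Longrightarrow> norm (?P 1 t - ?P 0 t) \<le> C"
    using continuous_on_atLeast_norm_bound[where T=T] by blast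
  have "\<forall>t\<in>{0..T}. norm (?P (Suc n) t - ?P n t) \<le> C * (L * t) ^ n / fact n" for n
  proof (induction n)
    case 0
    then show ?case using C by simp
  next
    case (Suc n)
    show ?case
    proof
      fix t assume t: "t \<in> {0..T}"
      have "norm (?P (Suc (Suc n)) t - ?P (Suc n) t)
          = norm ((LINT s:{0..t}|lborel. g s (?P (Suc n) s)) - (LINT s:{0..t}|lborel. g s (?P n s)))"
        by simp
      also have "\<dots> \<le> C * (L * t) ^ Suc n / fact (Suc n)"
        by (rule norm_integral_along_diff_le[OF continuous_on_picard_iter[OF w] continuous_on_picard_iter[OF w]])
           (use Suc.IH t in auto)
      finally show "norm (?P (Suc (Suc n)) t - ?P (Suc n) t) \<le> C * (L * t) ^ Suc n / fact (Suc n)" .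
    qed
  qed
  then show ?thesis using that C(1) by blast
qed

text \<open>The successive differences are dominated by the terms of the exponential series for \<open>L T\<close>,
  so the Weierstrass M-test gives uniform convergence on \<open>[0, T]\<close>.\<close>

lemma picard_iter_uniform_limit:
  assumes w: "continuous_on {0..} w"
  shows "uniform_limit {0..T} (picard_iter g w) (picard_limit g w) sequentially"
proof -
  let ?P = "picard_iter g w"
  obtain C where C: "0 \<le> C"
    and diff: "\<And>n t. t \<in> {0..T} \<Longrightarrow> norm (?P (Suc n) t - ?P n t) \<le> C * (L * t) ^ n / fact n"
    using picard_iter_diff_le[OF w, where T=T] by blast
  define d where "d k t = ?P (Suc k) t - ?P k t" for k t
  have "uniform_limit {0..T} (\<lambda>n t. \<Sum>k<n. d k t) (\<lambda>t. \<Sum>k. d k t) sequentially"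
  proof (rule Weierstrass_m_test[OF _ exp_series_term_summable])
    fix k t assume t: "t \<in> {0..T}"
    have "C * (L * t) ^ k \<le> C * (L * T) ^ k"
      using t C L_nonneg by (intro mult_left_mono power_mono mult_left_mono) auto
    then show "norm (d k t) \<le> C * (L * T) ^ k / fact k"
      using diff[OF t, of k] unfolding d_def by (meson divide_right_mono fact_ge_zero order_trans)
  qed
  from uniform_limit_add[OF uniform_limit_const[where c=w] this]
  have "uniform_limit {0..T} (\<lambda>n t. w t + (\<Sum>k<n. d k t)) (\<lambda>t. w t + (\<Sum>k. d k t)) sequentially" .
  moreover have "w t + (\<Sum>k<n. d k t) = ?P n t" for n t
    unfolding d_def using sum_lessThan_telescope[of "\<lambda>k. ?P k t" n] by simp
  ultimately have ul: "uniform_limit {0..T} ?P (\<lambda>t. w t + (\<Sum>k. d k t)) sequentially"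
    by simp
  have "picard_limit g w t = w t + (\<Sum>k. d k t)" if "t \<in> {0..T}" for t
    unfolding picard_limit_def by (rule limI tendsto_uniform_limitI[OF ul that])+
  then show ?thesis
    using ul uniform_limit_cong'[where X="{0..T}" and f="?P" and g="?P" and h="picard_limit g w"
        and i="\<lambda>t. w t + (\<Sum>k. d k t)" and F=sequentially]
    by simp
qed

lemma continuous_on_picard_limit:
  assumes w: "continuous_on {0..} w"
  shows "continuous_on {0..} (picard_limit g w)"
proof (rule continuous_on_atLeast_if_atLeastAtMost)
  fix T :: real
  have "continuous_on {0..T} (picard_iter g w n)" for n
    by (rule continuous_on_subset[OF continuous_on_picard_iter[OF w]]) auto
  then show "continuous_on {0..T} (picard_limit g w)"
    by (intro uniform_limit_theorem[OF _ picard_iter_uniform_limit[OF w]] always_eventually) auto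
qed

lemma picard_limit_solves:
  assumes w: "continuous_on {0..} w"
  shows "solves_integral_equation g w (picard_limit g w)"
  unfolding solves_integral_equation_def
proof (intro conjI allI impI)
  let ?P = "picard_iter g w" and ?X = "picard_limit g w"
  show cont: "continuous_on {0..} ?X"
    by (rule continuous_on_picard_limit[OF w])
  fix t :: real assume t: "0 \<le> t"
  have "(\<lambda>n. LINT s:{0..t}|lborel. g s (?P n s)) \<longlonglongrightarrow> (LINT s:{0..t}|lborel. g s (?X s))"
  proof (rule tendstoI)
    fix e :: real assume "0 < e"
    define \<delta> where "\<delta> = e / (L * t + 1)"
    have Lt: "0 \<le> L * t" using L_nonneg t by simp
    then have "0 < \<delta>" "\<delta> * (L * t) < e"
      using \<open>0 < e\<close> by (simp_all add: \<delta>_def field_simps)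
    from uniform_limitD[OF picard_iter_uniform_limit[OF w, where T=t] \<open>0 < \<delta>\<close>]
    show "\<forall>\<^sub>F n in sequentially. dist (LINT s:{0..t}|lborel. g s (?P n s)) (LINT s:{0..t}|lborel. g s (?X s)) < e"
    proof eventually_elim
      case (elim n)
      have "norm ((LINT s:{0..t}|lborel. g s (?P n s)) - (LINT s:{0..t}|lborel. g s (?X s)))
          \<le> \<delta> * (L * t) ^ Suc 0 / fact (Suc 0)"
        by (rule norm_integral_along_diff_le[OF continuous_on_picard_iter[OF w] cont t])
           (use elim in \<open>auto simp: dist_norm intro: less_imp_le\<close>)
      then show ?case using \<open>\<delta> * (L * t) < e\<close> by (simp add: dist_norm)
    qed
  qed
  then have "(\<lambda>n. ?P (Suc n) t) \<longlonglongrightarrow> w t + (LINT s:{0..t}|lborel. g s (?X s))"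
    by (simp add: tendsto_add)
  moreover have "(\<lambda>n. ?P n t) \<longlonglongrightarrow> ?X t"
    using tendsto_uniform_limitI[OF picard_iter_uniform_limit[OF w, where T=t]] t by simp
  then have "(\<lambda>n. ?P (Suc n) t) \<longlonglongrightarrow> ?X t"
    by (rule LIMSEQ_Suc)
  ultimately show "?X t = w t + (LINT s:{0..t}|lborel. g s (?X s))"
    using LIMSEQ_unique by blast
qed

lemma solves_integral_equation_unique:
  assumes X: "solves_integral_equation g w X" and Y: "solves_integral_equation g w Y" and t: "0 \<le> t"
  shows "X t = Y t"
proof -
  have X_cont: "continuous_on {0..} X" and Y_cont: "continuous_on {0..} Y"
    using X Y by (simp_all add: solves_integral_equation_def)
  obtain C where C: "0 \<le> C" "\<And>s. s \<in> {0..t} \<Longrightarrow> norm (X s - Y s) \<le> C"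
    using continuous_on_atLeast_norm_bound[OF continuous_on_diff[OF X_cont Y_cont]] by blast
  have "\<forall>s\<in>{0..t}. norm (X s - Y s) \<le> C * (L * s) ^ n / fact n" for n
  proof (induction n)
    case 0
    then show ?case using C by simp
  next
    case (Suc n)
    show ?case
    proof
      fix s assume s: "s \<in> {0..t}"
      have "X s - Y s = (LINT r:{0..s}|lborel. g r (X r)) - (LINT r:{0..s}|lborel. g r (Y r))"
        using X Y s by (simp add: solves_integral_equation_def)
      also have "norm \<dots> \<le> C * (L * s) ^ Suc n / fact (Suc n)"
        by (rule norm_integral_along_diff_le[OF X_cont Y_cont]) (use Suc.IH s in auto)
      finally show "norm (X s - Y s) \<le> C * (L * s) ^ Suc n / fact (Suc n)" .
    qed
  qed
  then have "\<forall>n. norm (X t - Y t) \<le> C * (L * t) ^ n / fact n"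
    using t by simp
  then have "norm (X t - Y t) \<le> 0"
    by (intro LIMSEQ_le_const[OF summable_LIMSEQ_zero[OF exp_series_term_summable]]) auto
  then show ?thesis by simp
qed

end

section \<open>Progressive measurability\<close>

lemma space_filtration: "filtration_on M F \<Longrightarrow> 0 \<le> t \<Longrightarrow> space (F t) = space M"
  by (simp add: filtration_on_def)

lemma measurable_filtration_mono:
  assumes "filtration_on M F" "0 \<le> s" "s \<le> t" "f \<in> borel_measurable (F s)"
  shows "f \<in> borel_measurable (F t)"
proof -
  have "sets (F s) \<subseteq> sets (F t)" "space (F s) = space (F t)"
    using assms(1-3) by (auto simp: filtration_on_def)
  then show ?thesis using measurable_mono[of borel borel "F s" "F t"] assms(4) by auto
qed

lemma measurable_fst_restrict_lborel:
  "fst \<in> borel_measurable (restrict_space lborel S \<Otimes>\<^sub>M N :: (real \<times> 'a) measure)"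
proof -
  have "(\<lambda>x. x) \<in> borel_measurable (restrict_space lborel S)"
    by (rule measurable_restrict_space1) simp
  then show ?thesis by (rule measurable_compose[OF measurable_fst])
qed

lemma floor_grid_tendsto: "(\<lambda>n. real_of_int \<lfloor>real (Suc n) * s\<rfloor> / real (Suc n)) \<longlonglongrightarrow> s"
proof (rule tendsto_sandwich[OF _ _ _ tendsto_const])
  show "\<forall>\<^sub>F n in sequentially. s - 1 / real (Suc n) \<le> real_of_int \<lfloor>real (Suc n) * s\<rfloor> / real (Suc n)"
  proof (intro always_eventually allI)
    fix n
    have "(real (Suc n) * s - 1) / real (Suc n) \<le> real_of_int \<lfloor>real (Suc n) * s\<rfloor> / real (Suc n)"
      by (intro divide_right_mono) linarith+
    then show "s - 1 / real (Suc n) \<le> real_of_int \<lfloor>real (Suc n) * s\<rfloor> / real (Suc n)"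
      by (simp add: diff_divide_distrib)
  qed
  show "\<forall>\<^sub>F n in sequentially. real_of_int \<lfloor>real (Suc n) * s\<rfloor> / real (Suc n) \<le> s"
    by (intro always_eventually allI) (simp add: divide_le_eq mult.commute)
  show "(\<lambda>n. s - 1 / real (Suc n)) \<longlonglongrightarrow> s"
    using tendsto_diff[OF tendsto_const LIMSEQ_inverse_real_of_nat] by (simp add: inverse_eq_divide)
qed

text \<open>The approximants evaluate \<open>X\<close> on the grid \<open>\<lfloor>(n + 1) s\<rfloor> / (n + 1)\<close>, clipped to \<open>[0, T]\<close>;
  each is a countable combination of \<open>\<F>\<^sub>T\<close>-measurable maps, and they converge by path continuity.\<close>

lemma prog_measurable_if_continuous_adapted:
  fixes X :: "real \<Rightarrow> 'a \<Rightarrow> 'b::metric_space"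
  assumes filt: "filtration_on M F" and adapted: "adapted F X"
    and cont: "\<And>\<omega>. \<omega> \<in> space M \<Longrightarrow> continuous_on {0..} (\<lambda>t. X t \<omega>)"
  shows "prog_measurable F X"
  unfolding prog_measurable_def
proof (intro allI impI)
  fix T :: real assume T: "0 \<le> T"
  let ?N = "restrict_space lborel {0..T} \<Otimes>\<^sub>M F T"
  define \<tau> where "\<tau> n s = min T (max 0 (real_of_int \<lfloor>real (Suc n) * s\<rfloor> / real (Suc n)))" for n s
  have "(\<lambda>z. X (\<tau> n (fst z)) (snd z)) \<in> borel_measurable ?N" for n
  proof (rule measurable_compose_countable'[where f="\<lambda>k z. X (min T (max 0 (real_of_int k / real (Suc n)))) (snd z)"
        and g="\<lambda>z. \<lfloor>real (Suc n) * fst z\<rfloor>" and I=UNIV, unfolded \<tau>_def[symmetric]])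
    fix k :: int
    let ?t = "min T (max 0 (real_of_int k / real (Suc n)))"
    have t: "0 \<le> ?t" "?t \<le> T" using T by auto
    then have "X ?t \<in> borel_measurable (F ?t)" using adapted by (simp add: adapted_def)
    then have "X ?t \<in> borel_measurable (F T)" by (rule measurable_filtration_mono[OF filt t])
    then show "(\<lambda>z. X (min T (max 0 (real_of_int k / real (Suc n)))) (snd z)) \<in> borel_measurable ?N"
      by measurable
  next
    show "(\<lambda>z. \<lfloor>real (Suc n) * fst z\<rfloor>) \<in> measurable ?N (count_space UNIV)"
      using measurable_fst_restrict_lborel by measurable
  qed auto
  then show "(\<lambda>(s, \<omega>). X s \<omega>) \<in> borel_measurable ?N"
  proof (rule borel_measurable_LIMSEQ_metric)
    fix z assume "z \<in> space ?N"
    then have s: "fst z \<in> {0..T}" and \<omega>: "snd z \<in> space M"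
      using space_filtration[OF filt T] by (auto simp: space_pair_measure)
    have "(\<lambda>n. \<tau> n (fst z)) \<longlonglongrightarrow> min T (max 0 (fst z))"
      unfolding \<tau>_def by (intro tendsto_intros floor_grid_tendsto)
    then have \<tau>: "(\<lambda>n. \<tau> n (fst z)) \<longlonglongrightarrow> fst z" using s by simp
    have "(\<lambda>n. X (\<tau> n (fst z)) (snd z)) \<longlonglongrightarrow> X (fst z) (snd z)"
      by (rule continuous_on_tendsto_compose[OF cont[OF \<omega>] \<tau>]) (use s T in \<open>auto simp: \<tau>_def\<close>)
    then show "(\<lambda>n. X (\<tau> n (fst z)) (snd z)) \<longlonglongrightarrow> (\<lambda>(s, \<omega>). X s \<omega>) z"
      by (simp add: case_prod_beta)
  qed
qed

lemma adapted_if_prog_measurable: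
  assumes "prog_measurable F X"
  shows "adapted F X"
  unfolding adapted_def
proof (intro allI impI)
  fix t :: real assume t: "0 \<le> t"
  have "(\<lambda>(s, \<omega>). X s \<omega>) \<in> borel_measurable (restrict_space lborel {0..t} \<Otimes>\<^sub>M F t)"
    using assms t by (simp add: prog_measurable_def)
  from measurable_compose[OF measurable_Pair1'[of t] this] t
  show "X t \<in> borel_measurable (F t)" by simp
qed

lemma borel_measurable_path_if_prog_measurable:
  assumes filt: "filtration_on M F" and "prog_measurable F X" and t: "0 \<le> t" and \<omega>: "\<omega> \<in> space M"
  shows "(\<lambda>s. X s \<omega>) \<in> borel_measurable (restrict_space lborel {0..t})"
proof -
  have "(\<lambda>(s, \<omega>). X s \<omega>) \<in> borel_measurable (restrict_space lborel {0..t} \<Otimes>\<^sub>M F t)"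
    using assms by (simp add: prog_measurable_def)
  from measurable_compose[OF measurable_Pair2'[of \<omega>] this] \<omega> space_filtration[OF filt t]
  show ?thesis by simp
qed

lemma prog_measurable_compose:
  fixes X :: "real \<Rightarrow> 'a \<Rightarrow> 'b::second_countable_topology" and Y :: "real \<Rightarrow> 'a \<Rightarrow> 'c::second_countable_topology"
    and f :: "'b \<Rightarrow> 'c \<Rightarrow> 'd::topological_space"
  assumes "prog_measurable F X" "prog_measurable F Y"
    and f: "continuous_on UNIV (\<lambda>z. f (fst z) (snd z))"
  shows "prog_measurable F (\<lambda>t \<omega>. f (X t \<omega>) (Y t \<omega>))"
  unfolding prog_measurable_def
proof (intro allI impI)
  fix T :: real assume "0 \<le> T"
  then have [measurable]:
      "(\<lambda>(s, \<omega>). X s \<omega>) \<in> borel_measurable (restrict_space lborel {0..T} \<Otimes>\<^sub>M F T)"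
      "(\<lambda>(s, \<omega>). Y s \<omega>) \<in> borel_measurable (restrict_space lborel {0..T} \<Otimes>\<^sub>M F T)"
    using assms by (simp_all add: prog_measurable_def)
  have "(\<lambda>z. ((\<lambda>(s, \<omega>). X s \<omega>) z, (\<lambda>(s, \<omega>). Y s \<omega>) z))
      \<in> borel_measurable (restrict_space lborel {0..T} \<Otimes>\<^sub>M F T)"
    by (rule borel_measurable_Pair) measurable
  from measurable_compose[OF this borel_measurable_continuous_onI[OF f]]
  show "(\<lambda>(s, \<omega>). f (X s \<omega>) (Y s \<omega>)) \<in> borel_measurable (restrict_space lborel {0..T} \<Otimes>\<^sub>M F T)"
    by (simp add: case_prod_beta)
qed

lemma prog_measurable_LIMSEQ:
  fixes X :: "nat \<Rightarrow> real \<Rightarrow> 'a \<Rightarrow> 'b::metric_space"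
  assumes filt: "filtration_on M F" and "\<And>n. prog_measurable F (X n)"
    and lim: "\<And>t \<omega>. 0 \<le> t \<Longrightarrow> \<omega> \<in> space M \<Longrightarrow> (\<lambda>n. X n t \<omega>) \<longlonglongrightarrow> Y t \<omega>"
  shows "prog_measurable F Y"
  unfolding prog_measurable_def
proof (intro allI impI)
  fix T :: real assume T: "0 \<le> T"
  show "(\<lambda>(s, \<omega>). Y s \<omega>) \<in> borel_measurable (restrict_space lborel {0..T} \<Otimes>\<^sub>M F T)"
  proof (rule borel_measurable_LIMSEQ_metric)
    show "(\<lambda>(s, \<omega>). X n s \<omega>) \<in> borel_measurable (restrict_space lborel {0..T} \<Otimes>\<^sub>M F T)" for n
      using assms(2)[of n] T by (simp add: prog_measurable_def)
    fix z assume "z \<in> space (restrict_space lborel {0..T} \<Otimes>\<^sub>M F T)"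
    then show "(\<lambda>n. (\<lambda>(s, \<omega>). X n s \<omega>) z) \<longlonglongrightarrow> (\<lambda>(s, \<omega>). Y s \<omega>) z"
      using lim space_filtration[OF filt T] by (auto simp: space_pair_measure)
  qed
qed

text \<open>Clipping the integration variable to \<open>[0, T]\<close> does not change the integrals over \<open>[0, t]\<close>,
  \<open>t \<le> T\<close>, but makes the integrand jointly measurable in \<open>((t, \<omega>), s)\<close>.\<close>

lemma prog_measurable_set_integral:
  fixes X :: "real \<Rightarrow> 'a \<Rightarrow> 'b::{banach, second_countable_topology}"
  assumes "prog_measurable F X"
  shows "prog_measurable F (\<lambda>t \<omega>. LINT s:{0..t}|lborel. X s \<omega>)"
  unfolding prog_measurable_def
proof (intro allI impI)
  fix T :: real assume T: "0 \<le> T"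
  let ?R = "restrict_space lborel {0..T}"
  let ?N = "?R \<Otimes>\<^sub>M F T"
  define clip where "clip s = min T (max 0 s)" for s :: real
  have X[measurable]: "(\<lambda>(s, \<omega>). X s \<omega>) \<in> borel_measurable ?N"
    using assms T by (simp add: prog_measurable_def)
  have [measurable]: "(\<lambda>z. fst (fst z)) \<in> borel_measurable (?N \<Otimes>\<^sub>M lborel)"
    by (rule measurable_compose[OF measurable_fst measurable_fst_restrict_lborel])
  have "(\<lambda>z. clip (snd z)) \<in> measurable (?N \<Otimes>\<^sub>M lborel) ?R"
    using T by (intro measurable_restrict_space2) (auto simp: clip_def)
  then have "(\<lambda>z. X (clip (snd z)) (snd (fst z))) \<in> borel_measurable (?N \<Otimes>\<^sub>M lborel)"
    using measurable_compose[OF measurable_Pair X] by (simp add: case_prod_beta)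
  moreover have "(\<lambda>z. indicator {0..fst (fst z)} (snd z) :: real) \<in> borel_measurable (?N \<Otimes>\<^sub>M lborel)"
    unfolding indicator_def atLeastAtMost_iff by measurable
  ultimately have "(\<lambda>x. \<integral>s. indicator {0..fst x} s *\<^sub>R X (clip s) (snd x) \<partial>lborel) \<in> borel_measurable ?N"
    by (intro lborel.borel_measurable_lebesgue_integral) (simp add: case_prod_beta)
  then show "(\<lambda>(t, \<omega>). LINT s:{0..t}|lborel. X s \<omega>) \<in> borel_measurable ?N"
  proof (rule measurable_cong[THEN iffD1, rotated])
    fix x assume "x \<in> space ?N"
    then have "fst x \<le> T" by (auto simp: space_pair_measure)
    then show "(\<integral>s. indicator {0..fst x} s *\<^sub>R X (clip s) (snd x) \<partial>lborel) = (\<lambda>(t, \<omega>). LINT s:{0..t}|lborel. X s \<omega>) x"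
      unfolding set_lebesgue_integral_def
      by (auto simp: case_prod_beta clip_def intro!: Bochner_Integration.integral_cong split: split_indicator)
  qed
qed

section \<open>Controlled processes\<close>

locale controlled_system =
  fixes E :: "('i::finite \<times> 'j::finite) set"
    and \<mu> :: "'i \<Rightarrow> 'j \<Rightarrow> real" and \<theta> r l :: "'i \<Rightarrow> real"
    and x :: "real^'i"
    and M :: "'a measure" and F :: "real \<Rightarrow> 'a measure"
    and U :: "real \<Rightarrow> 'a \<Rightarrow> (real^'i) \<times> (real^'j)" and W :: "real \<Rightarrow> 'a \<Rightarrow> real^'i"
    and L :: real
  assumes tree: "is_tree E"
    and admissible: "admissible M F U W"
    and L_nonneg: "0 \<le> L"
    and lipschitz: "\<And>u y z. u \<in> UU \<Longrightarrow> norm (drift_ext E \<mu> \<theta> l y u - drift_ext E \<mu> \<theta> l z u) \<le> L * norm (y - z)"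
begin

abbreviation drift_path :: "'a \<Rightarrow> real \<Rightarrow> real^'i \<Rightarrow> real^'i"
  where "drift_path \<omega> s y \<equiv> drift_ext E \<mu> \<theta> l y (U s \<omega>)"

abbreviation noise_path :: "'a \<Rightarrow> real \<Rightarrow> real^'i"
  where "noise_path \<omega> t \<equiv> x + (\<chi> i. r i * W t \<omega> $ i)"

lemma filtration: "filtration_on M F"
  using admissible by (simp add: admissible_def)

lemma U_in_UU: "0 \<le> s \<Longrightarrow> \<omega> \<in> space M \<Longrightarrow> U s \<omega> \<in> UU"
  using admissible by (simp add: admissible_def)

lemma prog_measurable_U: "prog_measurable F U"
  using admissible by (simp add: admissible_def)

lemma continuous_on_noise_path: "\<omega> \<in> space M \<Longrightarrow> continuous_on {0..} (noise_path \<omega>)"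
  using admissible unfolding admissible_def brownian_motion_def
  by (intro continuous_intros) auto

lemma prog_measurable_noise_path: "prog_measurable F (\<lambda>t \<omega>. noise_path \<omega> t)"
proof (rule prog_measurable_if_continuous_adapted[OF filtration _ continuous_on_noise_path])
  have W: "adapted F W"
    using admissible by (simp add: admissible_def brownian_motion_def)
  have cont: "continuous_on UNIV (\<lambda>v::real^'i. x + (\<chi> i. r i * v $ i))"
    by (intro continuous_intros)
  show "adapted F (\<lambda>t \<omega>. noise_path \<omega> t)"
    unfolding adapted_def
  proof (intro allI impI)
    fix t :: real assume "0 \<le> t"
    with W have "W t \<in> borel_measurable (F t)" by (simp add: adapted_def)
    from measurable_compose[OF this borel_measurable_continuous_onI[OF cont]]
    show "(\<lambda>\<omega>. x + (\<chi> i. r i * W t \<omega> $ i)) \<in> borel_measurable (F t)" by simp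
  qed
qed

lemma lipschitz_integral_equation_drift_path:
  assumes \<omega>: "\<omega> \<in> space M"
  shows "lipschitz_integral_equation (drift_path \<omega>) L (norm (\<chi> i. l i))"
proof
  fix X :: "real \<Rightarrow> real^'i" and t :: real
  assume X: "continuous_on {0..} X" and t: "0 \<le> t"
  have "X \<in> borel_measurable (restrict_space borel {0..t})"
    by (intro borel_measurable_continuous_on_restrict continuous_on_subset[OF X]) auto
  then have [measurable]: "X \<in> borel_measurable (restrict_space lborel {0..t})"
    by (simp add: measurable_cong_sets[OF sets_restrict_space_cong[OF sets_lborel] refl])
  have [measurable]: "(\<lambda>s. U s \<omega>) \<in> borel_measurable (restrict_space lborel {0..t})"
    by (rule borel_measurable_path_if_prog_measurable[OF filtration prog_measurable_U t \<omega>])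
  have "(\<lambda>s. (X s, U s \<omega>)) \<in> borel_measurable (restrict_space lborel {0..t})"
    by measurable
  from measurable_compose[OF this borel_measurable_continuous_onI[OF continuous_on_drift_ext[OF tree]]]
  show "(\<lambda>s. drift_path \<omega> s (X s)) \<in> borel_measurable (restrict_space lborel {0..t})"
    by simp
next
  show "norm (drift_path \<omega> s y - drift_path \<omega> s z) \<le> L * norm (y - z)" if "0 \<le> s" for s y z
    by (rule lipschitz[OF U_in_UU[OF that \<omega>]])
  show "norm (drift_path \<omega> s 0) \<le> norm (\<chi> i. l i)" for s
    by (simp add: drift_ext_0[OF tree])
qed (rule L_nonneg)

lemma controlled_process_iff:
  "controlled_process E \<mu> \<theta> r l x M F U W X \<longleftrightarrow>
     adapted F X \<and> (\<forall>\<omega>\<in>space M. continuous_on {0..} (\<lambda>t. X t \<omega>)) \<and>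
     (AE \<omega> in M. solves_integral_equation (drift_path \<omega>) (noise_path \<omega>) (\<lambda>t. X t \<omega>))"
proof -
  have "(\<forall>t\<ge>0. set_integrable lborel {0..t} (\<lambda>s. drift E \<mu> \<theta> l (X s \<omega>) (U s \<omega>)) \<and>
          X t \<omega> = x + (\<chi> i. r i * W t \<omega> $ i) + (LINT s:{0..t}|lborel. drift E \<mu> \<theta> l (X s \<omega>) (U s \<omega>)))
      \<longleftrightarrow> solves_integral_equation (drift_path \<omega>) (noise_path \<omega>) (\<lambda>t. X t \<omega>)"
    if \<omega>: "\<omega> \<in> space M" and X: "continuous_on {0..} (\<lambda>t. X t \<omega>)" for \<omega>
  proof -
    interpret lipschitz_integral_equation "drift_path \<omega>" L "norm (\<chi> i. l i)"
      by (rule lipschitz_integral_equation_drift_path[OF \<omega>])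
    have "set_integrable lborel {0..t} (\<lambda>s. drift E \<mu> \<theta> l (X s \<omega>) (U s \<omega>))
        \<longleftrightarrow> set_integrable lborel {0..t} (\<lambda>s. drift_path \<omega> s (X s \<omega>))"
      and "(LINT s:{0..t}|lborel. drift E \<mu> \<theta> l (X s \<omega>) (U s \<omega>))
        = (LINT s:{0..t}|lborel. drift_path \<omega> s (X s \<omega>))" for t
      using drift_eq_drift_ext[OF U_in_UU[OF _ \<omega>]]
      by (auto simp: set_integrable_def set_lebesgue_integral_def split: split_indicator
          intro!: Bochner_Integration.integrable_cong Bochner_Integration.integral_cong)
    then show ?thesis
      using set_integrable_along[OF X] X
      by (auto simp: solves_integral_equation_def)
  qed
  then show ?thesis
    unfolding controlled_process_def
    by (intro iffI conjI; elim conjE; auto elim!: AE_mp intro!: AE_I2)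
qed

lemma prog_measurable_picard_iter:
  "prog_measurable F (\<lambda>t \<omega>. picard_iter (drift_path \<omega>) (noise_path \<omega>) n t)"
proof (induction n)
  case 0
  then show ?case using prog_measurable_noise_path by simp
next
  case (Suc n)
  have "prog_measurable F
      (\<lambda>s \<omega>. drift_ext E \<mu> \<theta> l (picard_iter (drift_path \<omega>) (noise_path \<omega>) n s) (U s \<omega>))"
    by (rule prog_measurable_compose[OF Suc prog_measurable_U continuous_on_drift_ext[OF tree]])
  from prog_measurable_compose[OF prog_measurable_noise_path prog_measurable_set_integral[OF this],
      of "\<lambda>a b. a + b"]
  show ?case by (simp add: continuous_on_add continuous_on_fst continuous_on_snd continuous_on_id)
qed

lemma controlled_process_picard_limit:
  "controlled_process E \<mu> \<theta> r l x M F U W (\<lambda>t \<omega>. picard_limit (drift_path \<omega>) (noise_path \<omega>) t)"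
proof -
  have solves: "solves_integral_equation (drift_path \<omega>) (noise_path \<omega>) (picard_limit (drift_path \<omega>) (noise_path \<omega>))"
    if "\<omega> \<in> space M" for \<omega>
    using lipschitz_integral_equation.picard_limit_solves[OF lipschitz_integral_equation_drift_path
        continuous_on_noise_path, OF that that] .
  have "prog_measurable F (\<lambda>t \<omega>. picard_limit (drift_path \<omega>) (noise_path \<omega>) t)"
  proof (rule prog_measurable_LIMSEQ[OF filtration prog_measurable_picard_iter])
    fix t :: real and \<omega> assume "0 \<le> t" "\<omega> \<in> space M"
    then show "(\<lambda>n. picard_iter (drift_path \<omega>) (noise_path \<omega>) n t) \<longlonglongrightarrow> picard_limit (drift_path \<omega>) (noise_path \<omega>) t"
      using tendsto_uniform_limitI[OF lipschitz_integral_equation.picard_iter_uniform_limit[OF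
          lipschitz_integral_equation_drift_path continuous_on_noise_path, where T=t]] by simp
  qed
  then show ?thesis
    using solves adapted_if_prog_measurable unfolding controlled_process_iff
    by (auto simp: solves_integral_equation_def intro: AE_I2)
qed

lemma controlled_process_unique:
  assumes "controlled_process E \<mu> \<theta> r l x M F U W X" "controlled_process E \<mu> \<theta> r l x M F U W X'"
  shows "AE \<omega> in M. \<forall>t\<ge>0. X t \<omega> = X' t \<omega>"
proof -
  have "AE \<omega> in M. solves_integral_equation (drift_path \<omega>) (noise_path \<omega>) (\<lambda>t. X t \<omega>)"
    and "AE \<omega> in M. solves_integral_equation (drift_path \<omega>) (noise_path \<omega>) (\<lambda>t. X' t \<omega>)"
    using assms by (simp_all add: controlled_process_iff)
  with AE_space show ?thesis
  proof eventually_elim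
    case (elim \<omega>)
    show ?case
      using lipschitz_integral_equation.solves_integral_equation_unique[OF
          lipschitz_integral_equation_drift_path[OF elim(1)] elim(2,3)] by blast
  qed
qed

end

theorem propositionA1:
  fixes E :: "('i::finite \<times> 'j::finite) set"
    and \<mu> :: "'i \<Rightarrow> 'j \<Rightarrow> real" and \<theta> r l :: "'i \<Rightarrow> real"
    and x :: "real^'i"
    and M :: "'a measure" and F :: "real \<Rightarrow> 'a measure"
    and U :: "real \<Rightarrow> 'a \<Rightarrow> (real^'i) \<times> (real^'j)" and W :: "real \<Rightarrow> 'a \<Rightarrow> real^'i"
  assumes "is_tree E"
    and "\<And>i j. (i, j) \<in> E \<Longrightarrow> \<mu> i j > 0"
    and "\<And>i j. (i, j) \<notin> E \<Longrightarrow> \<mu> i j = 0"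
    and "\<And>i. \<theta> i \<ge> 0"
    and "\<And>i. r i > 0"
    and "admissible M F U W"
  shows "(\<exists>X. controlled_process E \<mu> \<theta> r l x M F U W X) \<and>
         (\<forall>X X'. controlled_process E \<mu> \<theta> r l x M F U W X \<and>
                 controlled_process E \<mu> \<theta> r l x M F U W X'
                 \<longrightarrow> (AE \<omega> in M. \<forall>t\<ge>0. X t \<omega> = X' t \<omega>))"
proof -
  obtain L where "0 \<le> L"
    and "\<And>u y z. u \<in> UU \<Longrightarrow> norm (drift_ext E \<mu> \<theta> l y u - drift_ext E \<mu> \<theta> l z u) \<le> L * norm (y - z)"
    using drift_ext_lipschitz[OF assms(1)] by blast
  then interpret controlled_system E \<mu> \<theta> r l x M F U W L
    using assms(1,6) by unfold_locales
  show ?thesis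
    using controlled_process_picard_limit controlled_process_unique by blast
qed

end
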